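(* Let $m\ge2$, $k\ge1$ be integers, $\tau>0$, and $\Theta\sim U[0,1]$. Then: (1) $\mathbb{E}_\Theta[\mathcal{R}_{m,k,\Theta}(t)]=\frac{k(m^{1/k}-1)}{\ln m}\cdot t$ for every $t>0$; (2) $\mathbb{E}_\Theta\!\left[\frac{1}{\mathcal{R}_{m,k,\Theta}(t)}\right]=\frac{k(m^{1/k}-1)}{m^{1/k}\ln m}\cdot\frac1t$ for every $t>0$; (3) $\mathbb{E}_\Theta[\mathcal{D}_{m,k,\Theta}]=\frac{k(m^{1/k}-1)}{m^{1/k}\ln m}\cdot\Big(\sum_{\emptyset\ne\mathcal{N}\subseteq\mathcal{S}_{m,k}}\frac{(-1)^{|\mathcal{N}|+1}}{\mathrm{LCM}(\mathcal{N})}\Big)\cdot\frac1\tau$, where $\mathcal{S}_{m,k}=\{m^{(\kappa-1)/k}\}_{\kappa\in[k]}$.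
   Context: For $\theta\in[0,1]$, the shifted grid is $\mathcal{G}_{m,k,\theta}=\{m^{(p+\theta)/k}\tau:p\in\mathbb{Z}\}$ and $\mathcal{R}_{m,k,\theta}(t)=\min\{g\in\mathcal{G}_{m,k,\theta}:g>t\}$ for $t>0$. For $g>0$, $\Delta\ge0$, $\mathcal{M}_{g,\Delta}=\{0,g,2g,\dots,\lfloor\Delta/g\rfloor g\}$. The density coefficient is $\mathcal{D}_{m,k,\theta}=\lim_{\Delta\to\infty}\frac1\Delta\big|\bigcup_{g\in\mathcal{G}_{m,k,\theta}\cap[\mathcal{R}_{m,k,\theta}(\tau),\infty)}\mathcal{M}_{g,\Delta}\big|$. For a finite set $\mathcal{N}\subseteq\mathbb{R}_{>0}$, $\mathrm{LCM}(\mathcal{N})$ is the smallest positive real that is an integer multiple of every element of $\mathcal{N}$, or $\infty$ if none exists; $1/\infty=0$. *)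

theory Defs
  imports "HOL-Analysis.Analysis"
begin

definition grid :: "nat \<Rightarrow> nat \<Rightarrow> real \<Rightarrow> real \<Rightarrow> real set" where
  "grid m k \<theta> \<tau> = {real m powr ((real_of_int p + \<theta>) / real k) * \<tau> | p :: int. True}"

definition rnd :: "nat \<Rightarrow> nat \<Rightarrow> real \<Rightarrow> real \<Rightarrow> real \<Rightarrow> real" where
  "rnd m k \<theta> \<tau> t = (LEAST g. g \<in> grid m k \<theta> \<tau> \<and> t < g)"

definition mults :: "real \<Rightarrow> real \<Rightarrow> real set" where
  "mults g \<Delta> = (\<lambda>j. real j * g) ` {0..nat \<lfloor>\<Delta> / g\<rfloor>}"

definition density :: "nat \<Rightarrow> nat \<Rightarrow> real \<Rightarrow> real \<Rightarrow> real" where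
  "density m k \<theta> \<tau> =
     Lim at_top (\<lambda>\<Delta>. real (card (\<Union>g\<in>{g \<in> grid m k \<theta> \<tau>. rnd m k \<theta> \<tau> \<tau> \<le> g}. mults g \<Delta>)) / \<Delta>)"

definition common_pos_mult :: "real set \<Rightarrow> real \<Rightarrow> bool" where
  "common_pos_mult N x \<longleftrightarrow> 0 < x \<and> (\<forall>n\<in>N. \<exists>j::int. x = real_of_int j * n)"

text \<open>1 / LCM(N), where LCM(N) is the least common positive multiple, and 1/infinity = 0
  if no common positive multiple exists.\<close>
definition inv_LCM :: "real set \<Rightarrow> real" where
  "inv_LCM N = (if \<exists>x. common_pos_mult N x
                then 1 / (LEAST x. common_pos_mult N x) else 0)"

definition Sset :: "nat \<Rightarrow> nat \<Rightarrow> real set" where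
  "Sset m k = (\<lambda>\<kappa>. real m powr ((real \<kappa> - 1) / real k)) ` {1..k}"

end

theory Submission
  imports Defs
begin

(*
  Write q = m powr (1/k) = exp L with L = ln m / k.  The grid is {tau * exp (L * (p + theta))}, so
  R(t) = tau * exp (L * x(theta)) with x(theta) = floor (s - theta) + 1 + theta and s = ln (t/tau) / L.
  As theta runs through [0,1], x(theta) runs exactly once through (s, s+1], hence the expectations of
  R(t) and 1/R(t) are averages of exp (+-L x) over an interval of length one; this gives (1) and (2).

  For (3), the grid points above g0 = R(tau) are g0 * q^j.  Since q^k = m is an integer, every multiple
  of g0 * q^j is a multiple of g0 * q^(j mod k), so the counted set is the union of the multiple sets of
  the k points g0 * S_{m,k}.  The common multiples of finitely many positive reals are either {0} or
  the integer multiples of their LCM, so inclusion-exclusion gives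
  D = (SUM N. (-1)^(|N|+1) / LCM N) / R(tau), and (3) follows from (2) at t = tau.
*)

lemma has_integral_exp_affine:
  fixes c a lo hi :: real
  assumes "c \<noteq> 0" "lo \<le> hi"
  shows "((\<lambda>\<theta>. exp (c * (a + \<theta>))) has_integral (exp (c * (a + hi)) - exp (c * (a + lo))) / c) {lo..hi}"
proof -
  have "((\<lambda>\<theta>. exp (c * (a + \<theta>))) has_integral exp (c * (a + hi)) / c - exp (c * (a + lo)) / c) {lo..hi}"
  proof (rule fundamental_theorem_of_calculus[OF assms(2)])
    fix x assume "x \<in> {lo..hi}"
    have "((\<lambda>\<theta>. exp (c * (a + \<theta>)) / c) has_real_derivative exp (c * (a + x))) (at x within {lo..hi})"
      using assms(1) by (auto intro!: derivative_eq_intros)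
    then show "((\<lambda>\<theta>. exp (c * (a + \<theta>)) / c) has_vector_derivative exp (c * (a + x))) (at x within {lo..hi})"
      by (simp add: has_real_derivative_iff_has_vector_derivative)
  qed
  then show ?thesis by (simp add: diff_divide_distrib)
qed

lemma has_integral_exp_floor_shift:
  fixes c s :: real
  assumes "c \<noteq> 0"
  shows "((\<lambda>\<theta>. exp (c * (of_int \<lfloor>s - \<theta>\<rfloor> + 1 + \<theta>))) has_integral (exp (c * (s + 1)) - exp (c * s)) / c) {0..1}"
proof -
  define n where "n = \<lfloor>s\<rfloor>"
  define r where "r = s - of_int n"
  have r0: "0 \<le> r" and r1: "r < 1" unfolding r_def n_def by linarith+
  have affine_left: "((\<lambda>\<theta>. exp (c * (of_int n + 1 + \<theta>))) has_integral (exp (c * (s + 1)) - exp (c * (of_int n + 1))) / c) {0..r}"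
    using has_integral_exp_affine[OF assms r0, of "of_int n + 1"] by (simp add: r_def add_ac)
  have left: "((\<lambda>\<theta>. exp (c * (of_int \<lfloor>s - \<theta>\<rfloor> + 1 + \<theta>))) has_integral (exp (c * (s + 1)) - exp (c * (of_int n + 1))) / c) {0..r}"
  proof (rule has_integral_spike_finite[OF finite.emptyI _ affine_left])
    fix x assume "x \<in> {0..r} - {}"
    then have "\<lfloor>s - x\<rfloor> = n" using r1 r_def by (intro floor_unique) auto
    then show "exp (c * (of_int \<lfloor>s - x\<rfloor> + 1 + x)) = exp (c * (of_int n + 1 + x))" by simp
  qed
  have affine_right: "((\<lambda>\<theta>. exp (c * (of_int n + \<theta>))) has_integral (exp (c * (of_int n + 1)) - exp (c * s)) / c) {r..1}"
    using has_integral_exp_affine[OF assms, of r 1 "of_int n"] r1 by (simp add: r_def)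
  have right: "((\<lambda>\<theta>. exp (c * (of_int \<lfloor>s - \<theta>\<rfloor> + 1 + \<theta>))) has_integral (exp (c * (of_int n + 1)) - exp (c * s)) / c) {r..1}"
  proof (rule has_integral_spike_finite[of "{r}", OF _ _ affine_right])
    fix x assume "x \<in> {r..1} - {r}"
    then have "\<lfloor>s - x\<rfloor> = n - 1" using r0 r_def by (intro floor_unique) auto
    then show "exp (c * (of_int \<lfloor>s - x\<rfloor> + 1 + x)) = exp (c * (of_int n + x))" by simp
  qed simp
  have "(exp (c * (s + 1)) - exp (c * (of_int n + 1))) / c + (exp (c * (of_int n + 1)) - exp (c * s)) / c
     = (exp (c * (s + 1)) - exp (c * s)) / c"
    by (simp add: diff_divide_distrib)
  with has_integral_combine[OF r0 _ left right] r1 show ?thesis by simp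
qed

lemma card_UN_inclusion_exclusion:
  assumes "finite I" "\<And>i. i \<in> I \<Longrightarrow> finite (A i)"
  shows "real (card (\<Union>i\<in>I. A i))
    = (\<Sum>J\<in>Pow I - {{}}. (-1) ^ (card J + 1) * real (card (\<Inter>i\<in>J. A i)))"
proof -
  interpret Incl_Excl finite "real \<circ> card"
    by unfold_locales (auto simp: card_Un_disjnt)
  have "{J. J \<subseteq> I \<and> J \<noteq> {}} = Pow I - {{}}" by auto
  then show ?thesis using restricted_indexed[of I A] assms by simp
qed

lemma mem_mults_iff:
  assumes "g > 0" "\<Delta> \<ge> 0"
  shows "x \<in> mults g \<Delta> \<longleftrightarrow> 0 \<le> x \<and> x \<le> \<Delta> \<and> (\<exists>j::int. x = of_int j * g)"
proof
  assume "x \<in> mults g \<Delta>"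
  then obtain i where i: "i \<le> nat \<lfloor>\<Delta> / g\<rfloor>" and x: "x = real i * g" unfolding mults_def by auto
  then have "int i \<le> \<lfloor>\<Delta> / g\<rfloor>" using assms by (simp add: le_nat_iff)
  then have "real i \<le> \<Delta> / g" by (simp add: le_floor_iff)
  then have "x \<le> \<Delta>" using assms x by (simp add: field_simps)
  then show "0 \<le> x \<and> x \<le> \<Delta> \<and> (\<exists>j::int. x = of_int j * g)"
    using x assms by (auto intro!: exI[of _ "int i"])
next
  assume "0 \<le> x \<and> x \<le> \<Delta> \<and> (\<exists>j::int. x = of_int j * g)"
  then obtain j where x: "x = of_int j * g" and "0 \<le> x" "x \<le> \<Delta>" by auto
  then have "0 \<le> j" "of_int j \<le> \<Delta> / g" using assms by (simp_all add: field_simps zero_le_mult_iff)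
  then have "nat j \<in> {0..nat \<lfloor>\<Delta> / g\<rfloor>}" "x = real (nat j) * g"
    using x by (auto simp: le_floor_iff nat_mono)
  then show "x \<in> mults g \<Delta>" unfolding mults_def by blast
qed

lemma finite_mults [simp]: "finite (mults g \<Delta>)"
  unfolding mults_def by simp

lemma card_mults:
  assumes "g > 0"
  shows "card (mults g \<Delta>) = nat \<lfloor>\<Delta> / g\<rfloor> + 1"
proof -
  have "inj_on (\<lambda>j. real j * g) {0..nat \<lfloor>\<Delta> / g\<rfloor>}" using assms by (auto simp: inj_on_def)
  then show ?thesis unfolding mults_def by (simp add: card_image)
qed

lemma tendsto_card_mults_over:
  assumes "g > 0"
  shows "((\<lambda>\<Delta>. real (card (mults g \<Delta>)) / \<Delta>) \<longlongrightarrow> 1 / g) at_top"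
proof (rule tendsto_sandwich[of "\<lambda>_. 1 / g" _ _ "\<lambda>\<Delta>. 1 / g + 1 / \<Delta>"])
  show "\<forall>\<^sub>F \<Delta> in at_top. 1 / g \<le> real (card (mults g \<Delta>)) / \<Delta>"
    using eventually_gt_at_top[of 0]
  proof eventually_elim
    case (elim \<Delta>)
    then have "\<Delta> / g \<le> real (nat \<lfloor>\<Delta> / g\<rfloor> + 1)" by linarith
    then show ?case using elim assms by (simp add: card_mults field_simps)
  qed
  show "\<forall>\<^sub>F \<Delta> in at_top. real (card (mults g \<Delta>)) / \<Delta> \<le> 1 / g + 1 / \<Delta>"
    using eventually_gt_at_top[of 0]
  proof eventually_elim
    case (elim \<Delta>)
    then have "real (nat \<lfloor>\<Delta> / g\<rfloor> + 1) \<le> \<Delta> / g + 1" using assms by (simp add: divide_nonneg_pos)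
    then show ?case using elim assms by (simp add: card_mults field_simps)
  qed
  have "((\<lambda>\<Delta>. 1 / g + 1 / \<Delta>) \<longlongrightarrow> 1 / g + 0) at_top"
    by (intro tendsto_intros tendsto_divide_0[OF tendsto_const] filterlim_at_top_imp_at_infinity filterlim_ident)
  then show "((\<lambda>\<Delta>. 1 / g + 1 / \<Delta>) \<longlongrightarrow> 1 / g) at_top" by simp
qed simp

lemma mults_mult_subset:
  assumes "g > 0" "\<Delta> \<ge> 0" "a > 0"
  shows "mults (real a * g) \<Delta> \<subseteq> mults g \<Delta>"
proof
  fix x assume "x \<in> mults (real a * g) \<Delta>"
  then obtain j :: int where "0 \<le> x" "x \<le> \<Delta>" "x = of_int j * (real a * g)"
    using assms by (auto simp: mem_mults_iff)
  moreover have "of_int j * (real a * g) = of_int (j * int a) * g" by simp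
  ultimately show "x \<in> mults g \<Delta>" using assms by (auto simp: mem_mults_iff simp del: of_int_mult)
qed

definition common_mult :: "real set \<Rightarrow> real \<Rightarrow> bool" where
  "common_mult N x \<longleftrightarrow> (\<forall>n\<in>N. \<exists>j::int. x = of_int j * n)"

lemma common_pos_mult_iff: "common_pos_mult N x \<longleftrightarrow> 0 < x \<and> common_mult N x"
  unfolding common_pos_mult_def common_mult_def by auto

lemma common_mult_0: "common_mult N 0"
  unfolding common_mult_def by (auto intro!: exI[of _ 0])

lemma common_mult_diff:
  assumes "common_mult N a" "common_mult N b"
  shows "common_mult N (a - of_int i * b)"
  unfolding common_mult_def
proof
  fix n assume "n \<in> N"
  then obtain ja jb :: int where "a = of_int ja * n" "b = of_int jb * n"
    using assms unfolding common_mult_def by blast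
  then have "a - of_int i * b = of_int (ja - i * jb) * n" by (simp add: algebra_simps)
  then show "\<exists>j::int. a - of_int i * b = of_int j * n" by blast
qed

lemma least_common_pos_mult_exists:
  assumes "common_pos_mult N x" "n \<in> N" "n > 0"
  obtains l where "common_pos_mult N l" "\<And>y. common_pos_mult N y \<Longrightarrow> l \<le> y"
proof -
  \<comment> \<open>All common positive multiples lie in the well-ordered set \<open>n \<cdot> \<nat>\<close>.\<close>
  have as_nat_mult: "\<exists>j::nat. y = real j * n" if y: "common_pos_mult N y" for y
  proof -
    obtain j :: int where j: "y = of_int j * n" using y assms(2) unfolding common_pos_mult_def by blast
    then have "j > 0" using y assms(3) by (simp add: common_pos_mult_def zero_less_mult_iff)
    then show ?thesis using j by (intro exI[of _ "nat j"]) simp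
  qed
  define J where "J = (LEAST j::nat. common_pos_mult N (real j * n))"
  obtain j0 :: nat where "common_pos_mult N (real j0 * n)" using as_nat_mult[OF assms(1)] assms(1) by auto
  then have "common_pos_mult N (real J * n)" unfolding J_def by (rule LeastI)
  moreover have "real J * n \<le> y" if y_mult: "common_pos_mult N y" for y
  proof -
    obtain j :: nat where y: "y = real j * n" using as_nat_mult[OF y_mult] by blast
    then have "J \<le> j" unfolding J_def using y_mult by (intro Least_le) simp
    then show ?thesis unfolding y using assms(3) by (simp add: mult_right_mono)
  qed
  ultimately show thesis by (rule that)
qed

lemma common_mult_iff_multiple_of_least:
  assumes l: "common_pos_mult N l" and least: "\<And>y. common_pos_mult N y \<Longrightarrow> l \<le> y"
  shows "common_mult N x \<longleftrightarrow> (\<exists>i::int. x = of_int i * l)"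
proof
  assume x: "common_mult N x"
  have "0 < l" "common_mult N l" using l by (simp_all add: common_pos_mult_iff)
  define r where "r = x - of_int \<lfloor>x / l\<rfloor> * l"
  have "0 \<le> r" and "r < l"
    unfolding r_def using floor_divide_lower[OF \<open>0 < l\<close>, of x] floor_divide_upper[OF \<open>0 < l\<close>, of x]
    by (simp_all add: algebra_simps)
  moreover have "common_mult N r" unfolding r_def using x \<open>common_mult N l\<close> by (rule common_mult_diff)
  moreover have "\<not> common_pos_mult N r" using \<open>r < l\<close> least by (meson not_le)
  ultimately have "r = 0" by (simp add: common_pos_mult_iff)
  then show "\<exists>i::int. x = of_int i * l" unfolding r_def by auto
next
  assume "\<exists>i::int. x = of_int i * l"
  then obtain i :: int where "x = of_int i * l" by blast
  moreover have "common_mult N (0 - of_int (- i) * l)"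
    using common_mult_0 l by (intro common_mult_diff) (simp_all add: common_pos_mult_iff)
  ultimately show "common_mult N x" by simp
qed

lemma inv_LCM_eq:
  assumes "common_pos_mult N l" "\<And>y. common_pos_mult N y \<Longrightarrow> l \<le> y"
  shows "inv_LCM N = 1 / l"
  using assms Least_equality[of "common_pos_mult N" l] unfolding inv_LCM_def by auto

lemma Inter_mults_eq:
  assumes "N \<noteq> {}" "\<And>n. n \<in> N \<Longrightarrow> n > 0" "c > 0" "\<Delta> \<ge> 0"
  shows "(\<Inter>n\<in>N. mults (c * n) \<Delta>) = {x. 0 \<le> x \<and> x \<le> \<Delta> \<and> common_mult N (x / c)}"
proof -
  have "x = of_int j * (c * n) \<longleftrightarrow> x / c = of_int j * n" for x j n
    using assms(3) by (auto simp: field_simps)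
  then show ?thesis using assms unfolding common_mult_def by (auto simp: mem_mults_iff)
qed

lemma tendsto_card_Inter_mults_over:
  assumes N: "N \<noteq> {}" "\<And>n. n \<in> N \<Longrightarrow> n > 0" and c: "c > 0"
  shows "((\<lambda>\<Delta>. real (card (\<Inter>n\<in>N. mults (c * n) \<Delta>)) / \<Delta>) \<longlongrightarrow> inv_LCM N / c) at_top"
proof (cases "\<exists>x. common_pos_mult N x")
  case False
  have Inter_eq: "(\<Inter>n\<in>N. mults (c * n) \<Delta>) = {0}" if \<Delta>: "\<Delta> \<ge> 0" for \<Delta>
  proof -
    have "x = 0" if "0 \<le> x" "common_mult N (x / c)" for x
      using False that c by (metis common_pos_mult_iff divide_pos_pos less_eq_real_def)
    then show ?thesis using \<Delta> common_mult_0[of N] by (auto simp: Inter_mults_eq[OF N c \<Delta>])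
  qed
  have ev: "\<forall>\<^sub>F \<Delta> in at_top. 1 / \<Delta> = real (card (\<Inter>n\<in>N. mults (c * n) \<Delta>)) / \<Delta>"
    using eventually_ge_at_top[of 0]
  proof eventually_elim
    case (elim \<Delta>)
    show ?case by (simp add: Inter_eq[OF elim])
  qed
  have "((\<lambda>\<Delta>. 1 / \<Delta>) \<longlongrightarrow> (0::real)) at_top"
    by (rule tendsto_divide_0[OF tendsto_const filterlim_at_top_imp_at_infinity[OF filterlim_ident]])
  moreover have "inv_LCM N = 0" unfolding inv_LCM_def using False by auto
  ultimately show ?thesis using tendsto_cong[OF ev] by simp
next
  case True
  obtain n where n: "n \<in> N" using N by blast
  obtain x where "common_pos_mult N x" using True by blast
  then obtain l where l: "common_pos_mult N l" and least: "\<And>y. common_pos_mult N y \<Longrightarrow> l \<le> y"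
    using least_common_pos_mult_exists n N(2)[OF n] by blast
  have cl: "0 < c * l" using l c by (simp add: common_pos_mult_iff)
  have Inter_eq: "(\<Inter>n\<in>N. mults (c * n) \<Delta>) = mults (c * l) \<Delta>" if \<Delta>: "\<Delta> \<ge> 0" for \<Delta>
  proof -
    have "x / c = of_int i * l \<longleftrightarrow> x = of_int i * (c * l)" for x i
      using c by (auto simp: field_simps)
    then show ?thesis
      by (auto simp: Inter_mults_eq[OF N c \<Delta>] mem_mults_iff[OF cl \<Delta>]
          common_mult_iff_multiple_of_least[OF l least])
  qed
  have ev: "\<forall>\<^sub>F \<Delta> in at_top. real (card (mults (c * l) \<Delta>)) / \<Delta> = real (card (\<Inter>n\<in>N. mults (c * n) \<Delta>)) / \<Delta>"
    using eventually_ge_at_top[of 0]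
  proof eventually_elim
    case (elim \<Delta>)
    show ?case by (simp add: Inter_eq[OF elim])
  qed
  moreover have "inv_LCM N / c = 1 / (c * l)" using inv_LCM_eq[OF l least] by simp
  ultimately show ?thesis using tendsto_cong[OF ev] tendsto_card_mults_over[OF cl] by simp
qed

locale shifted_grid =
  fixes m k :: nat and \<tau> :: real
  assumes m_ge_2: "m \<ge> 2" and k_ge_1: "k \<ge> 1" and \<tau>_pos: "\<tau> > 0"
begin

definition log_step :: real where
  "log_step = ln (real m) / real k"

lemma log_step_pos: "log_step > 0"
  using m_ge_2 k_ge_1 unfolding log_step_def by simp

lemma ln_m_eq: "ln (real m) = log_step * real k"
  using k_ge_1 unfolding log_step_def by simp

lemma real_powr_eq_exp: "real m powr x = exp (log_step * (real k * x))"
  using m_ge_2 unfolding powr_def ln_m_eq by (simp add: ac_simps)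

lemma exp_log_step: "exp log_step = real m powr (1 / real k)"
  using k_ge_1 by (simp add: real_powr_eq_exp)

lemma exp_log_step_times_k: "exp (log_step * real k) = real m"
  using m_ge_2 by (simp flip: ln_m_eq)

lemma grid_eq: "grid m k \<theta> \<tau> = {\<tau> * exp (log_step * (of_int p + \<theta>)) | p. True}"
  unfolding grid_def real_powr_eq_exp using k_ge_1 by (auto simp: ac_simps)

lemma rnd_eq:
  assumes "t > 0"
  shows "rnd m k \<theta> \<tau> t = \<tau> * exp (log_step * (of_int \<lfloor>ln (t / \<tau>) / log_step - \<theta>\<rfloor> + 1 + \<theta>))"
proof -
  define s where "s = ln (t / \<tau>) / log_step"
  have above_t_iff: "t < \<tau> * exp (log_step * x) \<longleftrightarrow> s < x" for x
  proof -
    have "t < \<tau> * exp (log_step * x) \<longleftrightarrow> t / \<tau> < exp (log_step * x)"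
      using \<tau>_pos by (simp add: pos_divide_less_eq ac_simps)
    also have "\<dots> \<longleftrightarrow> ln (t / \<tau>) < log_step * x"
      using assms \<tau>_pos by (metis divide_pos_pos exp_less_cancel_iff exp_ln)
    also have "\<dots> \<longleftrightarrow> s < x" unfolding s_def using log_step_pos by (simp add: field_simps)
    finally show ?thesis .
  qed
  have "(LEAST g. g \<in> grid m k \<theta> \<tau> \<and> t < g) = \<tau> * exp (log_step * (of_int \<lfloor>s - \<theta>\<rfloor> + 1 + \<theta>))"
  proof (rule Least_equality)
    show "\<tau> * exp (log_step * (of_int \<lfloor>s - \<theta>\<rfloor> + 1 + \<theta>)) \<in> grid m k \<theta> \<tau> \<and>
        t < \<tau> * exp (log_step * (of_int \<lfloor>s - \<theta>\<rfloor> + 1 + \<theta>))"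
      unfolding grid_eq above_t_iff by (auto intro!: exI[of _ "\<lfloor>s - \<theta>\<rfloor> + 1"]) linarith
  next
    fix g assume "g \<in> grid m k \<theta> \<tau> \<and> t < g"
    then obtain p where g: "g = \<tau> * exp (log_step * (of_int p + \<theta>))" and "t < g"
      unfolding grid_eq by blast
    then have "s < of_int p + \<theta>" by (simp add: above_t_iff)
    then have "\<lfloor>s - \<theta>\<rfloor> < p" by linarith
    then have "of_int \<lfloor>s - \<theta>\<rfloor> + 1 + \<theta> \<le> of_int p + \<theta>" by linarith
    then show "\<tau> * exp (log_step * (of_int \<lfloor>s - \<theta>\<rfloor> + 1 + \<theta>)) \<le> g"
      unfolding g using log_step_pos \<tau>_pos by simp
  qed
  then show ?thesis unfolding rnd_def s_def .
qed

lemma grid_pos: "g \<in> grid m k \<theta> \<tau> \<Longrightarrow> g > 0"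
  using \<tau>_pos by (auto simp: grid_eq)

lemma rnd_in_grid: "t > 0 \<Longrightarrow> rnd m k \<theta> \<tau> t \<in> grid m k \<theta> \<tau>"
  unfolding rnd_eq grid_eq by (auto intro!: exI[of _ "\<lfloor>ln (t / \<tau>) / log_step - \<theta>\<rfloor> + 1"])

lemma has_integral_rnd:
  assumes t: "t > 0"
  shows "((\<lambda>\<theta>. rnd m k \<theta> \<tau> t) has_integral
           (real k * (real m powr (1 / real k) - 1) / ln (real m) * t)) {0..1}"
proof -
  define s where "s = ln (t / \<tau>) / log_step"
  have exp_s: "exp (log_step * s) = t / \<tau>" using log_step_pos t \<tau>_pos unfolding s_def by simp
  have "((\<lambda>\<theta>. \<tau> * exp (log_step * (of_int \<lfloor>s - \<theta>\<rfloor> + 1 + \<theta>))) has_integral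
      \<tau> * ((exp (log_step * (s + 1)) - exp (log_step * s)) / log_step)) {0..1}"
    by (intro has_integral_mult_right has_integral_exp_floor_shift) (use log_step_pos in simp)
  moreover have "\<tau> * ((exp (log_step * (s + 1)) - exp (log_step * s)) / log_step)
      = real k * (real m powr (1 / real k) - 1) / ln (real m) * t"
    unfolding distrib_left exp_add exp_s mult_1_right exp_log_step ln_m_eq
    using \<tau>_pos log_step_pos k_ge_1 by (simp add: field_simps)
  ultimately show ?thesis by (simp add: rnd_eq[OF t] s_def)
qed

lemma has_integral_inverse_rnd:
  assumes t: "t > 0"
  shows "((\<lambda>\<theta>. 1 / rnd m k \<theta> \<tau> t) has_integral
           (real k * (real m powr (1 / real k) - 1) / (real m powr (1 / real k) * ln (real m)) * (1 / t))) {0..1}"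
proof -
  define s where "s = ln (t / \<tau>) / log_step"
  have exp_s: "exp (log_step * s) = t / \<tau>" using log_step_pos t \<tau>_pos unfolding s_def by simp
  have "((\<lambda>\<theta>. 1 / \<tau> * exp (- log_step * (of_int \<lfloor>s - \<theta>\<rfloor> + 1 + \<theta>))) has_integral
      1 / \<tau> * ((exp (- log_step * (s + 1)) - exp (- log_step * s)) / - log_step)) {0..1}"
    by (intro has_integral_mult_right has_integral_exp_floor_shift) (use log_step_pos in simp)
  moreover have "1 / \<tau> * ((exp (- log_step * (s + 1)) - exp (- log_step * s)) / - log_step)
      = real k * (real m powr (1 / real k) - 1) / (real m powr (1 / real k) * ln (real m)) * (1 / t)"
    unfolding mult_minus_left exp_minus distrib_left exp_add exp_s mult_1_right exp_log_step ln_m_eq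
    using \<tau>_pos log_step_pos k_ge_1 t m_ge_2 by (simp add: field_simps)
  moreover have "1 / rnd m k \<theta> \<tau> t = 1 / \<tau> * exp (- log_step * (of_int \<lfloor>s - \<theta>\<rfloor> + 1 + \<theta>))" for \<theta>
    unfolding rnd_eq[OF t] s_def mult_minus_left exp_minus by (simp add: divide_inverse)
  ultimately show ?thesis by simp
qed

lemma grid_ge_eq:
  assumes "g0 \<in> grid m k \<theta> \<tau>"
  shows "{g \<in> grid m k \<theta> \<tau>. g0 \<le> g} = range (\<lambda>j::nat. g0 * exp (log_step * real j))"
proof -
  obtain p0 where g0: "g0 = \<tau> * exp (log_step * (of_int p0 + \<theta>))" using assms unfolding grid_eq by blast
  show ?thesis
  proof (intro equalityI subsetI)
    fix g assume "g \<in> {g \<in> grid m k \<theta> \<tau>. g0 \<le> g}"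
    then obtain p where g: "g = \<tau> * exp (log_step * (of_int p + \<theta>))" and "g0 \<le> g"
      unfolding grid_eq by auto
    then have "log_step * (of_int p0 + \<theta>) \<le> log_step * (of_int p + \<theta>)" using g0 \<tau>_pos by simp
    then have "p0 \<le> p" using log_step_pos by (simp add: mult_le_cancel_left)
    then have "g = g0 * exp (log_step * real (nat (p - p0)))"
      unfolding g g0 by (simp add: mult.assoc algebra_simps flip: exp_add)
    then show "g \<in> range (\<lambda>j::nat. g0 * exp (log_step * real j))" by blast
  next
    fix g assume "g \<in> range (\<lambda>j::nat. g0 * exp (log_step * real j))"
    then obtain j :: nat where g: "g = g0 * exp (log_step * real j)" by blast
    then have "g = \<tau> * exp (log_step * (of_int (p0 + int j) + \<theta>))"
      unfolding g0 by (simp add: mult.assoc algebra_simps flip: exp_add)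
    moreover have "g0 \<le> g" unfolding g using g0 \<tau>_pos log_step_pos by simp
    ultimately show "g \<in> {g \<in> grid m k \<theta> \<tau>. g0 \<le> g}" unfolding grid_eq by blast
  qed
qed

lemma Sset_eq: "Sset m k = (\<lambda>b::nat. exp (log_step * real b)) ` {..<k}"
proof -
  have "Sset m k = (\<lambda>\<kappa>. real m powr ((real \<kappa> - 1) / real k)) ` Suc ` {..<k}"
    unfolding Sset_def image_Suc_lessThan ..
  then show ?thesis using k_ge_1 by (simp add: image_image real_powr_eq_exp)
qed

lemma UN_mults_grid_ge_eq:
  assumes g0: "g0 \<in> grid m k \<theta> \<tau>" and \<Delta>: "\<Delta> \<ge> 0"
  shows "(\<Union>g\<in>{g \<in> grid m k \<theta> \<tau>. g0 \<le> g}. mults g \<Delta>) = (\<Union>n\<in>Sset m k. mults (g0 * n) \<Delta>)"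
proof -
  have "g0 > 0" using g0 by (rule grid_pos)
  have "mults (g0 * exp (log_step * real j)) \<Delta> \<subseteq> mults (g0 * exp (log_step * real (j mod k))) \<Delta>" for j
  proof -
    have "real j = real (j div k) * real k + real (j mod k)"
      by (metis div_mult_mod_eq of_nat_add of_nat_mult)
    then have "exp (log_step * real j) = exp (log_step * real k) ^ (j div k) * exp (log_step * real (j mod k))"
      by (simp add: algebra_simps exp_add flip: exp_of_nat_mult)
    then have "g0 * exp (log_step * real j) = real (m ^ (j div k)) * (g0 * exp (log_step * real (j mod k)))"
      by (simp add: exp_log_step_times_k)
    then show ?thesis
      using \<open>g0 > 0\<close> \<Delta> m_ge_2 by (simp only:) (intro mults_mult_subset, simp_all)
  qed
  then have "(\<Union>j. mults (g0 * exp (log_step * real j)) \<Delta>) = (\<Union>b\<in>{..<k}. mults (g0 * exp (log_step * real b)) \<Delta>)"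
    using k_ge_1 by (fastforce intro: mod_less_divisor)
  then show ?thesis unfolding grid_ge_eq[OF g0] Sset_eq by simp
qed

lemma density_eq:
  "density m k \<theta> \<tau> = (\<Sum>N\<in>Pow (Sset m k) - {{}}. (-1) ^ (card N + 1) * inv_LCM N) / rnd m k \<theta> \<tau> \<tau>"
proof -
  define g0 where "g0 = rnd m k \<theta> \<tau> \<tau>"
  have g0_grid: "g0 \<in> grid m k \<theta> \<tau>" unfolding g0_def using \<tau>_pos by (rule rnd_in_grid)
  then have "g0 > 0" by (rule grid_pos)
  have Sset_pos: "n > 0" if "n \<in> Sset m k" for n using that by (auto simp: Sset_eq)
  have "finite (Sset m k)" by (simp add: Sset_eq)
  let ?count = "\<lambda>\<Delta>. real (card (\<Union>g\<in>{g \<in> grid m k \<theta> \<tau>. g0 \<le> g}. mults g \<Delta>)) / \<Delta>"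
  let ?incl_excl = "\<lambda>\<Delta>. \<Sum>N\<in>Pow (Sset m k) - {{}}. (-1) ^ (card N + 1) * (real (card (\<Inter>n\<in>N. mults (g0 * n) \<Delta>)) / \<Delta>)"
  have "\<forall>\<^sub>F \<Delta> in at_top. ?incl_excl \<Delta> = ?count \<Delta>"
    using eventually_ge_at_top[of 0]
  proof eventually_elim
    case (elim \<Delta>)
    show ?case
      unfolding UN_mults_grid_ge_eq[OF g0_grid elim]
        card_UN_inclusion_exclusion[OF \<open>finite (Sset m k)\<close> finite_mults]
      by (simp add: sum_divide_distrib)
  qed
  moreover have "(?incl_excl \<longlongrightarrow> (\<Sum>N\<in>Pow (Sset m k) - {{}}. (-1) ^ (card N + 1) * (inv_LCM N / g0))) at_top"
    using Sset_pos \<open>g0 > 0\<close> by (intro tendsto_intros tendsto_card_Inter_mults_over) auto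
  ultimately have "(?count \<longlongrightarrow> (\<Sum>N\<in>Pow (Sset m k) - {{}}. (-1) ^ (card N + 1) * inv_LCM N) / g0) at_top"
    by (simp add: tendsto_cong sum_divide_distrib)
  then show ?thesis unfolding density_def g0_def by (rule tendsto_Lim[rotated]) simp
qed

end

theorem claim3p1:
  fixes m k :: nat and \<tau> :: real
  assumes "m \<ge> 2" and "k \<ge> 1" and "\<tau> > 0"
  shows "(\<forall>t::real. t > 0 \<longrightarrow>
            ((\<lambda>\<theta>. rnd m k \<theta> \<tau> t) has_integral
               (real k * (real m powr (1 / real k) - 1) / ln (real m) * t)) {0..1})
       \<and> (\<forall>t::real. t > 0 \<longrightarrow>
            ((\<lambda>\<theta>. 1 / rnd m k \<theta> \<tau> t) has_integral
               (real k * (real m powr (1 / real k) - 1) / (real m powr (1 / real k) * ln (real m)) * (1 / t))) {0..1})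
       \<and> ((\<lambda>\<theta>. density m k \<theta> \<tau>) has_integral
               (real k * (real m powr (1 / real k) - 1) / (real m powr (1 / real k) * ln (real m))
                * (\<Sum>N\<in>Pow (Sset m k) - {{}}. (-1) ^ (card N + 1) * inv_LCM N) * (1 / \<tau>))) {0..1}"
proof -
  interpret shifted_grid m k \<tau> using assms by unfold_locales
  define S where "S = (\<Sum>N\<in>Pow (Sset m k) - {{}}. (-1) ^ (card N + 1) * inv_LCM N)"
  have "((\<lambda>\<theta>. 1 / rnd m k \<theta> \<tau> \<tau> * S) has_integral
      real k * (real m powr (1 / real k) - 1) / (real m powr (1 / real k) * ln (real m)) * (1 / \<tau>) * S) {0..1}"
    using has_integral_inverse_rnd[OF \<tau>_pos] by (rule has_integral_mult_left)
  then have "((\<lambda>\<theta>. density m k \<theta> \<tau>) has_integral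
      real k * (real m powr (1 / real k) - 1) / (real m powr (1 / real k) * ln (real m)) * S * (1 / \<tau>)) {0..1}"
    by (simp add: density_eq S_def ac_simps)
  then show ?thesis unfolding S_def using has_integral_rnd has_integral_inverse_rnd by blast
qed

end
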